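(* Let $G=(V,E)$ be a classical graph with vertex set $V=[n]$ and let $\phi\colon M_n\to M_d$ be an orthogonal representation of $\mathcal{S}_G=\operatorname{span}\{|e_i\rangle\langle e_j| : i=j\text{ or } i \text{ adjacent to } j\}$. For each $i\in[n]$ let $v_i$ be a vector in the range of $\phi(|e_i\rangle\langle e_i|)$. Then the map $f\colon V\to\mathbb{C}^d$, $f(i)=v_i$, is an orthogonal representation of $G$.
   Context: $(|e_k\rangle)$ is the standard basis of $\mathbb{C}^n$. A classical orthogonal representation of $G$ is a map $f\colon V\to\mathbb{C}^d$ such that $f(i)\perp f(j)$ whenever $i\neq j$ and $i,j$ are not adjacent. Elements $a,b$ of a $C^*$-algebra are orthogonal, $a\perp b$, if $ab=ba=a^*b=ab^*=0$. For a quantum graph $\mathcal{S}\subseteq M_n$ (a subspace closed under adjoints containing $I_n$), a completely positive map $\phi\colon M_n\to M_d$ is an orthogonal representation of $\mathcal{S}$ if $\phi(A)\perp\phi(B)$ for all $A,B\in M_n$ with $A\mathcal{S}B=B\mathcal{S}A=A^*\mathcal{S}B=A\mathcal{S}B^*=\{0\}$. *)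

theory Defs
  imports "HOL-Analysis.Analysis" "HOL-Library.Complex_Order"
begin

text \<open>Matrices M_n are complex^'n^'n for a finite index type 'n (the index type
  plays the role of [n]); C^d is complex^'d.\<close>

definition cinner :: "complex^'n \<Rightarrow> complex^'n \<Rightarrow> complex" where
  "cinner x y = (\<Sum>i\<in>UNIV. cnj (x$i) * y$i)"

definition mat_adj :: "complex^'n^'m \<Rightarrow> complex^'m^'n" where
  "mat_adj A = (\<chi> i j. cnj (A$j$i))"

definition mat_scale :: "complex \<Rightarrow> complex^'n^'m \<Rightarrow> complex^'n^'m" where
  "mat_scale c A = (\<chi> i j. c * A$i$j)"

definition mat_unit :: "'n \<Rightarrow> 'n \<Rightarrow> complex^'n^'n" where
  "mat_unit i j = (\<chi> a b. if a = i \<and> b = j then 1 else 0)"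

definition mat_orth :: "complex^'d^'d \<Rightarrow> complex^'d^'d \<Rightarrow> bool" where
  "mat_orth a b \<longleftrightarrow> a ** b = 0 \<and> b ** a = 0 \<and> mat_adj a ** b = 0 \<and> a ** mat_adj b = 0"

text \<open>Block positivity: the block matrix [A a b]_{a,b<k} in M_k(M_n) is positive semidefinite.\<close>
definition block_psd :: "nat \<Rightarrow> (nat \<Rightarrow> nat \<Rightarrow> complex^'n^'n) \<Rightarrow> bool" where
  "block_psd k A \<longleftrightarrow> (\<forall>x :: nat \<Rightarrow> complex^'n.
      (\<Sum>a<k. \<Sum>b<k. cinner (x a) (A a b *v x b)) \<ge> 0)"

text \<open>Completely positive map: complex-linear and id_k \<otimes> phi positive for all k.\<close>
definition completely_positive :: "(complex^'n^'n \<Rightarrow> complex^'d^'d) \<Rightarrow> bool" where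
  "completely_positive \<phi> \<longleftrightarrow>
     (\<forall>A B. \<phi> (A + B) = \<phi> A + \<phi> B) \<and>
     (\<forall>c A. \<phi> (mat_scale c A) = mat_scale c (\<phi> A)) \<and>
     (\<forall>k A. block_psd k A \<longrightarrow> block_psd k (\<lambda>a b. \<phi> (A a b)))"

definition qorth_rep :: "(complex^'n^'n) set \<Rightarrow> (complex^'n^'n \<Rightarrow> complex^'d^'d) \<Rightarrow> bool" where
  "qorth_rep S \<phi> \<longleftrightarrow> completely_positive \<phi> \<and>
     (\<forall>A B. (\<forall>X\<in>S. A ** X ** B = 0 \<and> B ** X ** A = 0 \<and>
                    mat_adj A ** X ** B = 0 \<and> A ** X ** mat_adj B = 0)
            \<longrightarrow> mat_orth (\<phi> A) (\<phi> B))"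

definition graph_qgraph :: "('n \<Rightarrow> 'n \<Rightarrow> bool) \<Rightarrow> (complex^'n^'n) set" where
  "graph_qgraph E = {(\<Sum>p\<in>{(i,j). i = j \<or> E i j}. mat_scale (c p) (mat_unit (fst p) (snd p))) | c. True}"

definition orth_rep :: "('n \<Rightarrow> 'n \<Rightarrow> bool) \<Rightarrow> ('n \<Rightarrow> complex^'d) \<Rightarrow> bool" where
  "orth_rep E f \<longleftrightarrow> (\<forall>i j. i \<noteq> j \<and> \<not> E i j \<longrightarrow> cinner (f i) (f j) = 0)"

end

theory Submission
  imports Defs
begin

text \<open>For non-adjacent distinct i, j every X in S_G has X$i$j = 0 = X$j$i, so
  |e_i><e_i| X |e_j><e_j| = X$i$j |e_i><e_j| vanishes (and likewise with i, j swapped);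
  since the diagonal units are self-adjoint, the defining property of an orthogonal
  representation makes \<phi>(|e_i><e_i|) and \<phi>(|e_j><e_j|) orthogonal, and in particular
  adj(\<phi>(|e_i><e_i|)) \<phi>(|e_j><e_j|) = 0 forces vectors in their ranges to be orthogonal.\<close>

lemma mat_unit_mult_left:
  fixes X :: "complex^'n::finite^'n"
  shows "(mat_unit i j ** X) $ a $ b = (if a = i then X$j$b else 0)"
  by (simp add: matrix_matrix_mult_def mat_unit_def if_distrib if_distribR sum.delta cong: if_cong)

lemma mat_unit_mult_right:
  fixes X :: "complex^'n::finite^'n"
  shows "(X ** mat_unit i j) $ a $ b = (if b = j then X$a$i else 0)"
  by (simp add: matrix_matrix_mult_def mat_unit_def if_distrib if_distribR sum.delta' cong: if_cong)

lemma mat_unit_sandwich: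
  fixes X :: "complex^'n::finite^'n"
  shows "mat_unit i j ** X ** mat_unit k l = mat_scale (X$j$k) (mat_unit i l)"
  unfolding vec_eq_iff mat_unit_mult_right mat_unit_mult_left
  by (simp add: mat_scale_def mat_unit_def)

lemma mat_scale_zero [simp]: "mat_scale 0 A = 0"
  by (simp add: mat_scale_def vec_eq_iff)

lemma mat_adj_mat_unit: "mat_adj (mat_unit i j) = mat_unit j i"
  by (auto simp: mat_adj_def mat_unit_def vec_eq_iff)

lemma graph_qgraph_entry_eq_0:
  assumes "X \<in> graph_qgraph E" "i \<noteq> j" "\<not> E i j"
  shows "X $ i $ j = 0"
proof -
  obtain c where X: "X = (\<Sum>p\<in>{(i,j). i = j \<or> E i j}. mat_scale (c p) (mat_unit (fst p) (snd p)))"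
    using assms(1) unfolding graph_qgraph_def by blast
  have "X $ i $ j = (\<Sum>p\<in>{(i,j). i = j \<or> E i j}. mat_scale (c p) (mat_unit (fst p) (snd p)) $ i $ j)"
    unfolding X by (simp add: sum_component)
  also have "\<dots> = 0"
    by (rule sum.neutral) (use assms in \<open>auto simp: mat_scale_def mat_unit_def\<close>)
  finally show ?thesis .
qed

lemma qorth_rep_graph_mat_orth_units:
  assumes "qorth_rep (graph_qgraph E) \<phi>" "i \<noteq> j" "\<not> E i j" "\<not> E j i"
  shows "mat_orth (\<phi> (mat_unit i i)) (\<phi> (mat_unit j j))"
proof -
  have "mat_unit i i ** X ** mat_unit j j = 0" "mat_unit j j ** X ** mat_unit i i = 0"
    if "X \<in> graph_qgraph E" for X
    using that assms(2-4) by (simp_all add: mat_unit_sandwich graph_qgraph_entry_eq_0)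
  then show ?thesis
    using assms(1) unfolding qorth_rep_def by (simp add: mat_adj_mat_unit)
qed

lemma cinner_mat_adj:
  fixes P :: "complex^'n::finite^'m::finite"
  shows "cinner (P *v x) y = cinner x (mat_adj P *v y)"
proof -
  have "cinner (P *v x) y = (\<Sum>k\<in>UNIV. \<Sum>m\<in>UNIV. cnj (x$m) * (cnj (P$k$m) * y$k))"
    by (simp add: cinner_def matrix_vector_mult_def sum_distrib_left sum_distrib_right mult_ac)
  also have "\<dots> = (\<Sum>m\<in>UNIV. \<Sum>k\<in>UNIV. cnj (x$m) * (cnj (P$k$m) * y$k))"
    by (rule sum.swap)
  also have "\<dots> = cinner x (mat_adj P *v y)"
    by (simp add: cinner_def mat_adj_def matrix_vector_mult_def sum_distrib_left)
  finally show ?thesis .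
qed

lemma mat_orth_cinner_eq_0:
  assumes "mat_orth a b"
  shows "cinner (a *v x) (b *v y) = 0"
proof -
  have "cinner (a *v x) (b *v y) = cinner x ((mat_adj a ** b) *v y)"
    by (simp add: cinner_mat_adj matrix_vector_mul_assoc)
  also have "mat_adj a ** b = 0"
    using assms unfolding mat_orth_def by blast
  finally show ?thesis
    by (simp add: cinner_def)
qed

theorem proposition5p5:
  fixes E :: "'n::finite \<Rightarrow> 'n \<Rightarrow> bool"
    and \<phi> :: "complex^'n^'n \<Rightarrow> complex^'d::finite^'d"
    and v :: "'n \<Rightarrow> complex^'d"
  assumes "\<forall>i j. E i j \<longrightarrow> E j i"
    and "\<forall>i. \<not> E i i"
    and "qorth_rep (graph_qgraph E) \<phi>"
    and "\<forall>i. v i \<in> range (\<lambda>x. \<phi> (mat_unit i i) *v x)"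
  shows "orth_rep E v"
  unfolding orth_rep_def
proof (intro allI impI)
  fix i j assume "i \<noteq> j \<and> \<not> E i j"
  with assms(1,3) have "mat_orth (\<phi> (mat_unit i i)) (\<phi> (mat_unit j j))"
    by (blast intro: qorth_rep_graph_mat_orth_units)
  moreover obtain x y where "v i = \<phi> (mat_unit i i) *v x" "v j = \<phi> (mat_unit j j) *v y"
    using assms(4) by blast
  ultimately show "cinner (v i) (v j) = 0"
    by (simp add: mat_orth_cinner_eq_0)
qed

end
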